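(* Let $(O,m_0)$ be an occurrence net with its initial marking $m_0$. For every marking $m$: $(\overleftarrow O,m_0)\to^*(\overleftarrow O,m)$ if and only if $(\overleftarrow O,m_0)\rightharpoonup^*(\overleftarrow O,m)$, where $\to^*$ denotes a finite sequence of forward and/or backward firings and $\rightharpoonup^*$ a finite sequence of forward firings only.
   Context: A net has places, transitions, and nonempty preset/postset sets ${}^\bullet\mathsf t,\mathsf t^\bullet$ for each transition; markings are multisets of places; firing rule: if ${}^\bullet\mathsf t=m$, $\mathsf t^\bullet=m'$ then $(N,m\oplus m'')\xrightarrow{\mathsf t}(N,m'\oplus m'')$. With $\prec=\{(a,\mathsf t)\mid a\in{}^\bullet\mathsf t\}\cup\{(\mathsf t,a)\mid a\in\mathsf t^\bullet\}$ and $\preceq$ its reflexive-transitive closure, an occurrence net is a marked net $(O,m_0)$ with $\prec$ acyclic, every reachable marking a set, $m_0=\{a\mid{}^\bullet a=\emptyset\}$, $|{}^\bullet a|\le1$ for all places ${}^\bullet a=\{\mathsf t\mid a\in\mathsf t^\bullet\}$, and no transition $\mathsf t$ with $\mathsf t\#\mathsf t$ (where $x\#y$ iff there are distinct-or-not transitions $\mathsf t_1\preceq x,\mathsf t_2\preceq y$ with $\mathsf t_1\neq\mathsf t_2$ and ${}^\bullet\mathsf t_1\cap{}^\bullet\mathsf t_2\ne\emptyset$). The reversible version $\overleftarrow O$ has the same places, transitions $T_O\cup\{\underline{\mathsf t}\mid\mathsf t\in T_O\}$, forward transitions keep their pre/postsets, and ${}^\bullet\underline{\mathsf t}=\mathsf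 t^\bullet$, $\underline{\mathsf t}^\bullet={}^\bullet\mathsf t$. Firings of forward transitions $\mathsf t\in T_O$ are forward firings ($\rightharpoonup$), of reverse transitions backward firings. *)

theory Defs
  imports Main "HOL-Library.Multiset"
begin

record ('p, 't) net =
  places :: "'p set"
  trans  :: "'t set"
  pre    :: "'t \<Rightarrow> 'p set"
  post   :: "'t \<Rightarrow> 'p set"

definition net_wf :: "('p, 't) net \<Rightarrow> bool" where
  "net_wf N \<longleftrightarrow> (\<forall>t \<in> trans N.
      pre N t \<noteq> {} \<and> post N t \<noteq> {} \<and> finite (pre N t) \<and> finite (post N t) \<and>
      pre N t \<subseteq> places N \<and> post N t \<subseteq> places N)"

definition fire :: "('p, 't) net \<Rightarrow> 't \<Rightarrow> 'p multiset \<Rightarrow> 'p multiset \<Rightarrow> bool" where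
  "fire N t m m' \<longleftrightarrow> t \<in> trans N \<and>
     (\<exists>m''. m = mset_set (pre N t) + m'' \<and> m' = mset_set (post N t) + m'')"

definition step :: "('p, 't) net \<Rightarrow> 'p multiset \<Rightarrow> 'p multiset \<Rightarrow> bool" where
  "step N m m' \<longleftrightarrow> (\<exists>t. fire N t m m')"

definition place_pre :: "('p, 't) net \<Rightarrow> 'p \<Rightarrow> 't set" where
  "place_pre N a = {t \<in> trans N. a \<in> post N t}"

definition flow :: "('p, 't) net \<Rightarrow> ('p + 't) rel" where
  "flow N = {(Inl a, Inr t) | a t. t \<in> trans N \<and> a \<in> pre N t}
          \<union> {(Inr t, Inl a) | a t. t \<in> trans N \<and> a \<in> post N t}"

definition conflict :: "('p, 't) net \<Rightarrow> ('p + 't) \<Rightarrow> ('p + 't) \<Rightarrow> bool" where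
  "conflict N x y \<longleftrightarrow> (\<exists>t1 \<in> trans N. \<exists>t2 \<in> trans N.
      (Inr t1, x) \<in> (flow N)\<^sup>* \<and> (Inr t2, y) \<in> (flow N)\<^sup>* \<and>
      t1 \<noteq> t2 \<and> pre N t1 \<inter> pre N t2 \<noteq> {})"

definition is_set_marking :: "'p multiset \<Rightarrow> bool" where
  "is_set_marking m \<longleftrightarrow> (\<forall>a. count m a \<le> 1)"

definition occurrence_net :: "('p, 't) net \<Rightarrow> 'p multiset \<Rightarrow> bool" where
  "occurrence_net N m0 \<longleftrightarrow>
     net_wf N \<and>
     acyclic (flow N) \<and>
     finite {a \<in> places N. place_pre N a = {}} \<and>
     m0 = mset_set {a \<in> places N. place_pre N a = {}} \<and>
     (\<forall>m. (step N)\<^sup>*\<^sup>* m0 m \<longrightarrow> is_set_marking m) \<and>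
     (\<forall>a \<in> places N. card (place_pre N a) \<le> 1 \<and> finite (place_pre N a)) \<and>
     (\<forall>t \<in> trans N. \<not> conflict N (Inr t) (Inr t))"

text \<open>Reversible version: forward transitions Inl t, reverse transitions Inr t.\<close>
definition rev_net :: "('p, 't) net \<Rightarrow> ('p, 't + 't) net" where
  "rev_net N = \<lparr> places = places N,
                 trans = Inl ` trans N \<union> Inr ` trans N,
                 pre = case_sum (pre N) (post N),
                 post = case_sum (post N) (pre N) \<rparr>"

definition fwd_step :: "('p, 't + 't) net \<Rightarrow> 'p multiset \<Rightarrow> 'p multiset \<Rightarrow> bool" where
  "fwd_step R m m' \<longleftrightarrow> (\<exists>t. fire R (Inl t) m m')"

end

theory Submission
  imports Defs
begin

text \<open>A backward firing of \<open>t\<close> in a marking reached by forward firings only can be replaced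
  by cancelling the forward firing of \<open>t\<close> in that run. Since the postsets of distinct transitions
  are disjoint, the tokens \<open>t\<close> produced survive every later forward firing, which can therefore be
  permuted with the cancelled one; and \<open>t\<close> must have fired at all, because the initial marking
  contains no place of a postset.\<close>

lemma fire_rev_net_Inl:
  "fire (rev_net N) (Inl t) m m' \<longleftrightarrow> t \<in> trans N \<and>
     (\<exists>x. m = mset_set (pre N t) + x \<and> m' = mset_set (post N t) + x)"
  by (auto simp: fire_def rev_net_def)

lemma fire_rev_net_Inr:
  "fire (rev_net N) (Inr t) m m' \<longleftrightarrow> t \<in> trans N \<and>
     (\<exists>x. m = mset_set (post N t) + x \<and> m' = mset_set (pre N t) + x)"
  by (auto simp: fire_def rev_net_def)

lemma step_rev_net_cases:
  assumes "step (rev_net N) m m'"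
  obtains "fwd_step (rev_net N) m m'"
    | t x where "t \<in> trans N" "m = mset_set (post N t) + x" "m' = mset_set (pre N t) + x"
  using assms unfolding Defs.step_def fwd_step_def
  by (metis fire_rev_net_Inr sum.exhaust)

lemma fwd_step_imp_step: "fwd_step R m m' \<Longrightarrow> step R m m'"
  by (auto simp: fwd_step_def Defs.step_def)

lemma mset_set_subset_eq_if_disjoint:
  assumes "finite A" "finite B" "A \<inter> B = {}" "mset_set A + y = mset_set B + x"
  shows "mset_set A \<subseteq># x"
proof (rule mset_subset_eqI)
  fix a
  have "count (mset_set A) a + count y a = count (mset_set B) a + count x a"
    using assms(4) by (metis count_union)
  then show "count (mset_set A) a \<le> count x a"
    using assms(1-3) by (cases "a \<in> A"; cases "a \<in> B") (auto intro: count_inI)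
qed

lemma occurrence_net_post_disjoint:
  assumes occ: "occurrence_net N m0" and "t \<in> trans N" "t' \<in> trans N" "t \<noteq> t'"
  shows "post N t \<inter> post N t' = {}"
proof (rule ccontr)
  assume "post N t \<inter> post N t' \<noteq> {}"
  then obtain a where a: "a \<in> post N t" "a \<in> post N t'" by blast
  with occ \<open>t \<in> trans N\<close> have "card (place_pre N a) \<le> 1" "finite (place_pre N a)"
    unfolding occurrence_net_def net_wf_def by blast+
  moreover have "{t, t'} \<subseteq> place_pre N a"
    using a assms(2,3) by (auto simp: place_pre_def)
  ultimately have "card {t, t'} \<le> 1" by (meson card_mono order_trans)
  with \<open>t \<noteq> t'\<close> show False by simp
qed

lemma occurrence_net_initial_disjoint_post:
  assumes "occurrence_net N m0" "t \<in> trans N"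
  shows "set_mset m0 \<inter> post N t = {}"
  using assms unfolding occurrence_net_def by (auto simp: place_pre_def)

lemma fwd_reachable_undo_fire:
  assumes wf: "net_wf N"
    and post_disjoint: "\<And>t t'. t \<in> trans N \<Longrightarrow> t' \<in> trans N \<Longrightarrow> t \<noteq> t' \<Longrightarrow>
                          post N t \<inter> post N t' = {}"
    and initial: "\<And>t. t \<in> trans N \<Longrightarrow> set_mset m0 \<inter> post N t = {}"
    and reach: "(fwd_step (rev_net N))\<^sup>*\<^sup>* m0 m"
    and "t \<in> trans N" "m = mset_set (post N t) + y"
  shows "(fwd_step (rev_net N))\<^sup>*\<^sup>* m0 (mset_set (pre N t) + y)"
  using reach \<open>t \<in> trans N\<close> \<open>m = mset_set (post N t) + y\<close>
proof (induction arbitrary: t y rule: rtranclp_induct)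
  case base
  with wf obtain a where "a \<in> post N t" "finite (post N t)"
    unfolding net_wf_def by blast
  with base have "a \<in> set_mset m0" by simp
  with initial[OF base(1)] \<open>a \<in> post N t\<close> show ?case by blast
next
  case (step m1 m)
  from step.hyps(2) obtain t1 x where t1: "t1 \<in> trans N"
    and m1: "m1 = mset_set (pre N t1) + x" and m: "m = mset_set (post N t1) + x"
    by (auto simp: fwd_step_def fire_rev_net_Inl)
  show ?case
  proof (cases "t = t1")
    case True
    with m step.prems(2) m1 step.hyps(1) show ?thesis by simp
  next
    case False
    have "mset_set (post N t) \<subseteq># x"
      using mset_set_subset_eq_if_disjoint post_disjoint[OF step.prems(1) t1 False]
        wf step.prems t1 m unfolding net_wf_def by metis
    then obtain z where z: "x = mset_set (post N t) + z"
      by (metis mset_subset_eq_exists_conv)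
    have y: "y = mset_set (post N t1) + z"
      using step.prems(2) m z by (metis add.left_commute add_left_cancel)
    have "m1 = mset_set (post N t) + (mset_set (pre N t1) + z)"
      using m1 z by (simp add: ac_simps)
    then have "(fwd_step (rev_net N))\<^sup>*\<^sup>* m0 (mset_set (pre N t) + (mset_set (pre N t1) + z))"
      using step.IH step.prems(1) by blast
    moreover have "fwd_step (rev_net N)
        (mset_set (pre N t) + (mset_set (pre N t1) + z)) (mset_set (pre N t) + y)"
      unfolding fwd_step_def fire_rev_net_Inl using t1 y
      by (intro exI[of _ t1] conjI exI[of _ "mset_set (pre N t) + z"]) (auto simp: ac_simps)
    ultimately show ?thesis by simp
  qed
qed

theorem mainTheorem11:
  fixes Onet :: "('p, 't) net" and m0 m :: "'p multiset"
  assumes "occurrence_net Onet m0"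
  shows "(step (rev_net Onet))\<^sup>*\<^sup>* m0 m \<longleftrightarrow> (fwd_step (rev_net Onet))\<^sup>*\<^sup>* m0 m"
proof
  have wf: "net_wf Onet" using assms unfolding occurrence_net_def by blast
  assume "(step (rev_net Onet))\<^sup>*\<^sup>* m0 m"
  then show "(fwd_step (rev_net Onet))\<^sup>*\<^sup>* m0 m"
  proof (induction rule: rtranclp_induct)
    case (step m1 m2)
    from step.hyps(2) show ?case
    proof (cases rule: step_rev_net_cases)
      case 1
      with step.IH show ?thesis by simp
    next
      case (2 t x)
      with step.IH show ?thesis
        using fwd_reachable_undo_fire[OF wf occurrence_net_post_disjoint[OF assms]
              occurrence_net_initial_disjoint_post[OF assms]] by simp
    qed
  qed simp
next
  assume "(fwd_step (rev_net Onet))\<^sup>*\<^sup>* m0 m"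
  then show "(step (rev_net Onet))\<^sup>*\<^sup>* m0 m"
    by (rule rtranclp_mono[THEN predicate2D, rotated]) (auto intro: fwd_step_imp_step)
qed

end
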